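(* Let $(u_n)_{n\ge0}$ be a linear recurrence sequence of order $k$ with period $M$, and let $U_1,\dots,U_M$ be the associated polynomials (defined below). If $u_{A+j\ell}=0$ for $j=0,1,\dots,k-1$, where $A\equiv a\pmod M$ with $1\le a\le M$, $A\ge0$, and $\ell>0$ is divisible by $M$, then $U_a(x,y_1,\dots,y_r)=0$ identically (in particular $u_n=0$ for all $n\ge0$ with $n\equiv a\pmod M$).
   Context: Write the sequence as $u_n=\sum_{i=1}^mg_i(n)\alpha_i^n$ with distinct nonzero characteristic roots $\alpha_i$ and polynomials $g_i$. The period $M$ is the smallest $M\ge1$ such that whenever $\alpha_1^{e_1}\cdots\alpha_m^{e_m}$ ($e_i\in\mathbb Z$) is a root of unity, it is an $M$-th root of unity. Fix a primitive $M$-th root of unity $\zeta_M$ and multiplicatively independent algebraic numbers $\gamma_1,\dots,\gamma_r$ with $\alpha_i=\zeta_M^{e_{i,0}}\gamma_1^{e_{i,1}}\cdots\gamma_r^{e_{i,r}}$ ($e_{i,j}\in\mathbb Z$). For $1\le a\le M$ put $U_a(x,y_1,\dots,y_r)=\sum_{i=1}^mg_i(x)\zeta_M^{e_{i,0}a}y_1^{e_{i,1}}\cdots y_r^{e_{i,r}}$ (a polynomial in $x$ and Laurent polynomial in the $y_j$, with terms having equal exponent vectors combined), so that $u_n=U_a(n,\gamma_1^n,\dots,\gamma_r^n)$ for every $n\equiv a\pmod M$. *)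

theory Defs
  imports Complex_Main "HOL-Computational_Algebra.Polynomial"
begin

definition satisfies_lr :: "(nat \<Rightarrow> complex) \<Rightarrow> nat \<Rightarrow> bool" where
  "satisfies_lr u k \<longleftrightarrow>
     (\<exists>c :: nat \<Rightarrow> complex. \<forall>n. u (n + k) = (\<Sum>j<k. c j * u (n + j)))"

definition lrs_order :: "(nat \<Rightarrow> complex) \<Rightarrow> nat \<Rightarrow> bool" where
  "lrs_order u k \<longleftrightarrow> satisfies_lr u k \<and> (\<forall>k'<k. \<not> satisfies_lr u k')"

definition root_of_unity :: "complex \<Rightarrow> bool" where
  "root_of_unity z \<longleftrightarrow> (\<exists>n::nat. n > 0 \<and> z ^ n = 1)"

definition primitive_root_of_unity :: "nat \<Rightarrow> complex \<Rightarrow> bool" where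
  "primitive_root_of_unity M z \<longleftrightarrow> z ^ M = 1 \<and> (\<forall>d. 0 < d \<and> d < M \<longrightarrow> z ^ d \<noteq> 1)"

definition mon :: "nat \<Rightarrow> (nat \<Rightarrow> complex) \<Rightarrow> (nat \<Rightarrow> int) \<Rightarrow> complex" where
  "mon m \<alpha> e = (\<Prod>i<m. \<alpha> i powi e i)"

definition period_prop :: "nat \<Rightarrow> (nat \<Rightarrow> complex) \<Rightarrow> nat \<Rightarrow> bool" where
  "period_prop m \<alpha> M \<longleftrightarrow>
     (\<forall>e :: nat \<Rightarrow> int. root_of_unity (mon m \<alpha> e) \<longrightarrow> (mon m \<alpha> e) ^ M = 1)"

definition is_period :: "nat \<Rightarrow> (nat \<Rightarrow> complex) \<Rightarrow> nat \<Rightarrow> bool" where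
  "is_period m \<alpha> M \<longleftrightarrow> M \<ge> 1 \<and> period_prop m \<alpha> M \<and>
     (\<forall>M'. M' \<ge> 1 \<and> period_prop m \<alpha> M' \<longrightarrow> M \<le> M')"

definition mult_independent :: "nat \<Rightarrow> (nat \<Rightarrow> complex) \<Rightarrow> bool" where
  "mult_independent r \<gamma> \<longleftrightarrow> (\<forall>j<r. \<gamma> j \<noteq> 0) \<and>
     (\<forall>e :: nat \<Rightarrow> int. (\<Prod>j<r. \<gamma> j powi e j) = 1 \<longrightarrow> (\<forall>j<r. e j = 0))"

text \<open>Coefficient (a polynomial in x) of the monomial \<open>y_1^{v_1}\<cdots>y_r^{v_r}\<close> in \<open>U_a\<close>,
  after combining the terms with equal exponent vectors.\<close>
definition U_coeff ::
  "nat \<Rightarrow> nat \<Rightarrow> (nat \<Rightarrow> complex poly) \<Rightarrow> complex \<Rightarrow> (nat \<Rightarrow> int) \<Rightarrow> (nat \<Rightarrow> nat \<Rightarrow> int)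
     \<Rightarrow> nat \<Rightarrow> (nat \<Rightarrow> int) \<Rightarrow> complex poly" where
  "U_coeff m r g \<zeta> e0 e a v =
     (\<Sum>i\<in>{i. i < m \<and> (\<forall>j<r. e i j = v j)}. smult (\<zeta> powi (e0 i * int a)) (g i))"

definition U_zero ::
  "nat \<Rightarrow> nat \<Rightarrow> (nat \<Rightarrow> complex poly) \<Rightarrow> complex \<Rightarrow> (nat \<Rightarrow> int) \<Rightarrow> (nat \<Rightarrow> nat \<Rightarrow> int)
     \<Rightarrow> nat \<Rightarrow> bool" where
  "U_zero m r g \<zeta> e0 e a \<longleftrightarrow> (\<forall>v. U_coeff m r g \<zeta> e0 e a v = 0)"

end

theory Submission
  imports Defs "HOL-Computational_Algebra.Fundamental_Theorem_Algebra"
begin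

text \<open>
The subsequence \<open>v j = u (A + j l)\<close> again satisfies a linear recurrence of length \<open>k\<close>:
over \<open>\<complex>\<close> the characteristic polynomial \<open>\<chi>\<close> of \<open>u\<close> divides \<open>p(X\<^sup>l)\<close> for the monic \<open>p\<close>
whose roots are the \<open>l\<close>-th powers of the roots of \<open>\<chi>\<close>. Having \<open>k\<close> initial zeros, \<open>v\<close>
vanishes. As \<open>M\<close> divides \<open>l\<close>, all \<open>A + j l\<close> lie in the residue class of \<open>a\<close>, where
\<open>u\<close> is given by \<open>U\<^sub>a\<close>; so \<open>v\<close> is an exponential polynomial in \<open>j\<close> whose coefficients are
the coefficients \<open>U\<^sub>w\<close> of \<open>U\<^sub>a\<close> composed with \<open>j \<mapsto> A + j l\<close>, and whose bases \<open>(\<gamma>\<^sup>w)\<^sup>l\<close>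
are pairwise distinct by multiplicative independence. An exponential polynomial vanishing
on \<open>\<nat>\<close> has zero coefficients: the operator \<open>E - \<beta>\<close> (\<open>E\<close> the shift) lowers the degree of
the coefficient of \<open>\<beta>\<^sup>j\<close> and preserves the degrees of the others.
\<close>

text \<open>\<open>poly_shift q w\<close> is \<open>q(E) w\<close> for the shift \<open>E w n = w (n + 1)\<close>.\<close>
definition poly_shift :: "'a::comm_ring_1 poly \<Rightarrow> (nat \<Rightarrow> 'a) \<Rightarrow> nat \<Rightarrow> 'a" where
  "poly_shift q w n = (\<Sum>i\<le>degree q. coeff q i * w (n + i))"

lemma poly_shift_altdef:
  "degree q < N \<Longrightarrow> poly_shift q w n = (\<Sum>i<N. coeff q i * w (n + i))"
  unfolding poly_shift_def lessThan_Suc_atMost[symmetric]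
  by (rule sum.mono_neutral_left) (auto simp: coeff_eq_0)

lemma poly_shift_0 [simp]: "poly_shift 0 w n = 0"
  by (simp add: poly_shift_def)

lemma poly_shift_zero_seq [simp]: "poly_shift q (\<lambda>_. 0) n = 0"
  by (simp add: poly_shift_def)

lemma poly_shift_add: "poly_shift (p + q) w n = poly_shift p w n + poly_shift q w n"
proof -
  define N where "N = Suc (max (degree p) (degree q))"
  have "degree (p + q) < N"
    using degree_add_le_max[of p q] unfolding N_def by simp
  then show ?thesis
    by (simp add: poly_shift_altdef[of _ N] N_def sum.distrib algebra_simps)
qed

lemma poly_shift_smult: "poly_shift (smult a p) w n = a * poly_shift p w n"
  using degree_smult_le[of a p]
  by (simp add: poly_shift_altdef[of _ "Suc (degree p)"] sum_distrib_left mult.assoc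
      del: sum.lessThan_Suc)

lemma poly_shift_pCons: "poly_shift (pCons a p) w n = a * w n + poly_shift p w (Suc n)"
proof -
  have "degree (pCons a p) < Suc (Suc (degree p))"
    by (simp add: degree_pCons_le le_imp_less_Suc)
  then have "poly_shift (pCons a p) w n
      = (\<Sum>i<Suc (Suc (degree p)). coeff (pCons a p) i * w (n + i))"
    by (rule poly_shift_altdef)
  also have "\<dots> = a * w n + (\<Sum>i<Suc (degree p). coeff p i * w (Suc n + i))"
    by (subst sum.lessThan_Suc_shift) simp
  finally show ?thesis
    by (simp add: poly_shift_altdef[of p "Suc (degree p)"])
qed

lemma poly_shift_mult: "poly_shift (p * q) w n = poly_shift p (poly_shift q w) n"
  by (induction p arbitrary: n) (simp_all add: poly_shift_add poly_shift_smult poly_shift_pCons)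

lemma poly_shift_monom: "poly_shift (monom 1 l) w n = w (n + l)"
  by (induction l arbitrary: n) (simp_all add: monom_0 monom_Suc poly_shift_pCons)

lemma poly_shift_pcompose_monom:
  "poly_shift (pcompose p (monom 1 l)) w (n + j * l) = poly_shift p (\<lambda>i. w (n + i * l)) j"
proof (induction p arbitrary: j)
  case (pCons a p)
  have "poly_shift (pcompose p (monom 1 l)) w (n + j * l + l)
      = poly_shift p (\<lambda>i. w (n + i * l)) (Suc j)"
    using pCons.IH[of "Suc j"] by (simp add: algebra_simps)
  then show ?case
    by (simp add: pcompose_pCons poly_shift_add poly_shift_mult poly_shift_monom
        poly_shift_pCons poly_shift_smult algebra_simps)
qed simp

lemma satisfies_lr_monic_annihilator:
  assumes "satisfies_lr u k"
  obtains \<chi> where "degree \<chi> = k" "lead_coeff \<chi> = 1" "\<And>n. poly_shift \<chi> u n = 0"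
proof -
  obtain c where rec: "\<And>n. u (n + k) = (\<Sum>j<k. c j * u (n + j))"
    using assms unfolding satisfies_lr_def by blast
  define \<chi> where "\<chi> = monom 1 k - (\<Sum>j<k. monom (c j) j)"
  have coeff_\<chi>: "coeff \<chi> i = (if i = k then 1 else 0) - (if i < k then c i else 0)" for i
    by (simp add: \<chi>_def coeff_diff coeff_sum coeff_monom)
  have deg: "degree \<chi> = k"
    by (intro antisym degree_le le_degree) (simp_all add: coeff_\<chi>)
  moreover have "lead_coeff \<chi> = 1"
    by (simp add: deg coeff_\<chi>)
  moreover have "poly_shift \<chi> u n = 0" for n
  proof -
    have "poly_shift \<chi> u n = u (n + k) - (\<Sum>j<k. c j * u (n + j))"
      by (simp add: poly_shift_altdef[of _ "Suc k"] deg coeff_\<chi> sum_negf)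
    then show ?thesis
      using rec by simp
  qed
  ultimately show ?thesis
    using that by blast
qed

lemma monic_dvd_pcompose_monom:
  fixes \<chi> :: "complex poly"
  assumes "lead_coeff \<chi> = 1"
  obtains p where "degree p = degree \<chi>" "lead_coeff p = 1" "\<chi> dvd pcompose p (monom 1 l)"
  using assms
proof (induction "degree \<chi>" arbitrary: \<chi> thesis)
  case 0
  then have "\<chi> = 1"
    by (metis degree_0_id one_pCons)
  then show ?case
    using 0 by (intro "0.prems"(1)[of 1]) simp_all
next
  case (Suc d)
  have "\<not> constant (poly \<chi>)"
    using Suc.hyps(2) constant_degree[of \<chi>] by simp
  then obtain z where "poly \<chi> z = 0"
    using fundamental_theorem_of_algebra by blast
  then obtain q where q: "\<chi> = [:-z, 1:] * q"
    by (metis dvdE dvd_iff_poly_eq_0 minus_minus)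
  have "q \<noteq> 0"
    using q Suc.hyps(2) by auto
  then have "degree q = d"
    using Suc.hyps(2) unfolding q by (subst (asm) degree_mult_eq) auto
  have "lead_coeff q = 1"
    using Suc.prems(2) unfolding q by (subst (asm) lead_coeff_mult) simp
  then obtain p where p: "degree p = d" "lead_coeff p = 1" "q dvd pcompose p (monom 1 l)"
    using Suc.hyps(1) \<open>degree q = d\<close> by metis
  have "[:-z, 1:] dvd pcompose [:-(z ^ l), 1:] (monom 1 l)"
    by (simp add: dvd_iff_poly_eq_0 poly_pcompose poly_monom)
  then have "\<chi> dvd pcompose ([:-(z ^ l), 1:] * p) (monom 1 l)"
    unfolding q pcompose_mult by (rule mult_dvd_mono[OF _ p(3)])
  moreover have "degree ([:-(z ^ l), 1:] * p) = degree \<chi>"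
    using p Suc.hyps(2) by (subst degree_mult_eq) auto
  moreover have "lead_coeff ([:-(z ^ l), 1:] * p) = 1"
    using p by (subst lead_coeff_mult) simp
  ultimately show ?case
    using Suc.prems(1) by blast
qed

lemma monic_annihilator_zero_init:
  assumes "degree p = k" "lead_coeff p = 1" "\<And>n. poly_shift p v n = 0"
    and "\<And>j. j < k \<Longrightarrow> v j = 0"
  shows "v j = 0"
proof (induction j rule: less_induct)
  case (less j)
  show ?case
  proof (cases "j < k")
    case False
    then obtain t where t: "j = t + k"
      using le_add_diff_inverse2 by (metis not_less)
    have "0 = (\<Sum>i\<le>k. coeff p i * v (t + i))"
      using assms(3)[of t] by (simp add: poly_shift_def assms(1))
    also have "\<dots> = (\<Sum>i<k. coeff p i * v (t + i)) + v j"
      using t assms(1,2) by (simp flip: lessThan_Suc_atMost)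
    also have "(\<Sum>i<k. coeff p i * v (t + i)) = 0"
      using less t by (intro sum.neutral) simp
    finally show ?thesis by simp
  qed (use assms(4) in simp)
qed

lemma satisfies_lr_progression_zero:
  assumes "satisfies_lr u k" "\<And>j. j < k \<Longrightarrow> u (A + j * l) = 0"
  shows "u (A + j * l) = 0"
proof -
  obtain \<chi> where \<chi>: "degree \<chi> = k" "lead_coeff \<chi> = 1" "\<And>n. poly_shift \<chi> u n = 0"
    using satisfies_lr_monic_annihilator[OF assms(1)] by blast
  obtain p where p: "degree p = k" "lead_coeff p = 1" "\<chi> dvd pcompose p (monom 1 l)"
    using monic_dvd_pcompose_monom[OF \<chi>(2)] \<chi>(1) by metis
  then obtain h where h: "pcompose p (monom 1 l) = h * \<chi>"
    by (metis dvdE mult.commute)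
  have "poly_shift \<chi> u = (\<lambda>_. 0)"
    using \<chi>(3) by blast
  then have "poly_shift p (\<lambda>i. u (A + i * l)) n = 0" for n
    by (simp add: poly_shift_pcompose_monom[symmetric] h poly_shift_mult)
  from monic_annihilator_zero_init[OF p(1,2) this] assms(2) show ?thesis .
qed

lemma poly_eq_0_if_nat_roots:
  fixes p :: "'a::{idom,ring_char_0} poly"
  assumes "\<And>j::nat. poly p (of_nat j) = 0"
  shows "p = 0"
proof (rule ccontr)
  assume "p \<noteq> 0"
  then have "finite {x. poly p x = 0}"
    by (rule poly_roots_finite)
  moreover have "range (of_nat :: nat \<Rightarrow> 'a) \<subseteq> {x. poly p x = 0}"
    using assms by auto
  ultimately show False
    using range_inj_infinite[OF inj_of_nat] finite_subset by blast
qed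

lemma coeff_pcompose_shift_degree:
  fixes p :: "'a::idom poly"
  shows "coeff (pcompose p [:1, 1:]) (degree p) = lead_coeff p"
proof -
  have "degree (pcompose p [:1, 1:]) = degree p"
    by (simp add: degree_pcompose)
  then show ?thesis
    using lead_coeff_comp[of "[:1, 1:]" p] by simp
qed

text \<open>The coefficient of \<open>\<beta>\<^sup>j\<close> after applying \<open>E - c\<close> (\<open>E\<close> the shift) to \<open>P(j) \<beta>\<^sup>j\<close>.\<close>
definition shift_combination :: "'a::comm_ring_1 \<Rightarrow> 'a \<Rightarrow> 'a poly \<Rightarrow> 'a poly" where
  "shift_combination b c p = smult b (pcompose p [:1, 1:]) - smult c p"

definition poly_size :: "'a::zero poly \<Rightarrow> nat" where
  "poly_size p = (if p = 0 then 0 else Suc (degree p))"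

lemma exp_poly_shift_combination:
  "(\<Sum>s\<in>S. poly (shift_combination (\<beta> s) c (P s)) (of_nat j) * \<beta> s ^ j)
    = (\<Sum>s\<in>S. poly (P s) (of_nat (Suc j)) * \<beta> s ^ Suc j) - c * (\<Sum>s\<in>S. poly (P s) (of_nat j) * \<beta> s ^ j)"
  by (simp add: shift_combination_def poly_pcompose sum_subtractf sum_distrib_left algebra_simps)

lemma coeff_degree_shift_combination:
  fixes p :: "'a::idom poly"
  shows "coeff (shift_combination b c p) (degree p) = (b - c) * lead_coeff p"
  by (simp add: shift_combination_def coeff_pcompose_shift_degree algebra_simps)

lemma poly_size_shift_combination_le:
  fixes p :: "'a::idom poly"
  shows "poly_size (shift_combination b c p) \<le> poly_size p"
proof -
  have "degree (shift_combination b c p) \<le> degree p"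
    unfolding shift_combination_def
    by (intro degree_diff_le order_trans[OF degree_smult_le]) (simp_all add: degree_pcompose)
  then show ?thesis
    by (auto simp: poly_size_def shift_combination_def)
qed

lemma poly_size_shift_combination_less:
  fixes p :: "'a::idom poly"
  assumes "p \<noteq> 0"
  shows "poly_size (shift_combination c c p) < poly_size p"
proof -
  have "degree (shift_combination c c p) \<le> degree p" "coeff (shift_combination c c p) (degree p) = 0"
    using poly_size_shift_combination_le[of c c p] assms
    by (auto simp: poly_size_def coeff_degree_shift_combination split: if_splits)
  then have "shift_combination c c p = 0 \<or> degree (shift_combination c c p) < degree p"
    by (metis le_neq_implies_less leading_coeff_0_iff)
  with assms show ?thesis
    by (auto simp: poly_size_def)
qed

lemma exp_poly_eq_0_imp_coeffs_0:
  fixes P :: "'s \<Rightarrow> 'a::{field,ring_char_0} poly"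
  assumes fin: "finite S" and inj: "inj_on \<beta> S" and nz: "\<And>s. s \<in> S \<Longrightarrow> \<beta> s \<noteq> 0"
    and zero: "\<And>j::nat. (\<Sum>s\<in>S. poly (P s) (of_nat j) * \<beta> s ^ j) = 0"
    and "s \<in> S"
  shows "P s = 0"
proof -
  have "\<forall>s\<in>S. P s = 0" using zero
  proof (induction "\<Sum>s\<in>S. poly_size (P s)" arbitrary: P rule: less_induct)
    case less
    show ?case
    proof (rule ccontr)
      assume "\<not> (\<forall>s\<in>S. P s = 0)"
      then obtain t where t: "t \<in> S" "P t \<noteq> 0" by auto
      define Q where "Q s = shift_combination (\<beta> s) (\<beta> t) (P s)" for s
      have "(\<Sum>s\<in>S. poly (Q s) (of_nat j) * \<beta> s ^ j) = 0" for j :: nat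
        unfolding Q_def exp_poly_shift_combination less.prems by simp
      moreover have "(\<Sum>s\<in>S. poly_size (Q s)) < (\<Sum>s\<in>S. poly_size (P s))"
        using t unfolding Q_def
        by (intro sum_strict_mono_ex1[OF fin] ballI bexI[of _ t])
          (simp_all add: poly_size_shift_combination_le poly_size_shift_combination_less)
      ultimately have Q0: "\<forall>s\<in>S. Q s = 0"
        using less.hyps by blast
      have others: "P s = 0" if "s \<in> S" "s \<noteq> t" for s
      proof (rule ccontr)
        assume "P s \<noteq> 0"
        moreover have "\<beta> s \<noteq> \<beta> t"
          using inj that t(1) by (auto dest: inj_onD)
        ultimately have "coeff (Q s) (degree (P s)) \<noteq> 0"
          unfolding Q_def coeff_degree_shift_combination by simp
        then show False
          using Q0 that by simp
      qed
      have "poly (P t) (of_nat j) * \<beta> t ^ j = 0" for j :: nat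
        unfolding less.prems[of j, symmetric]
        by (rule sum.remove[OF fin t(1), THEN trans, symmetric]) (simp add: others sum.neutral)
      then have "P t = 0"
        using nz[OF t(1)] by (intro poly_eq_0_if_nat_roots) simp
      with t show False by simp
    qed
  qed
  with \<open>s \<in> S\<close> show ?thesis by blast
qed

lemma exp_poly_progression_eq_0_imp_coeffs_0:
  fixes P :: "'s \<Rightarrow> 'a::{field,ring_char_0} poly"
  assumes "finite S" "inj_on (\<lambda>s. \<beta> s ^ l) S" "\<And>s. s \<in> S \<Longrightarrow> \<beta> s \<noteq> 0" "l > 0"
    and zero: "\<And>j. (\<Sum>s\<in>S. poly (P s) (of_nat (A + j * l)) * \<beta> s ^ (A + j * l)) = 0"
    and "s \<in> S"
  shows "P s = 0"
proof -
  define P' where "P' s = smult (\<beta> s ^ A) (pcompose (P s) [:of_nat A, of_nat l:])" for s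
  have "(\<Sum>s\<in>S. poly (P' s) (of_nat j) * (\<beta> s ^ l) ^ j) = 0" for j
  proof -
    have "poly (P' s) (of_nat j) * (\<beta> s ^ l) ^ j
        = poly (P s) (of_nat (A + j * l)) * \<beta> s ^ (A + j * l)" for s
    proof -
      have "\<beta> s ^ (A + j * l) = \<beta> s ^ A * (\<beta> s ^ l) ^ j"
        by (simp add: power_add power_mult mult.commute[of j l])
      then show ?thesis
        by (simp add: P'_def poly_pcompose algebra_simps)
    qed
    then show ?thesis
      using zero by simp
  qed
  then have "P' s = 0"
    using assms by (intro exp_poly_eq_0_imp_coeffs_0[where \<beta> = "\<lambda>s. \<beta> s ^ l"]) simp_all
  then have "pcompose (P s) [:of_nat A, of_nat l:] = 0"
    using assms(3,6) by (simp add: P'_def)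
  then show ?thesis
    by (rule pcompose_eq_0) (use \<open>l > 0\<close> in simp)
qed

definition truncate_exps :: "nat \<Rightarrow> (nat \<Rightarrow> int) \<Rightarrow> nat \<Rightarrow> int" where
  "truncate_exps r v = (\<lambda>j. if j < r then v j else 0)"

lemma mon_truncate_exps: "mon r \<gamma> (truncate_exps r v) = mon r \<gamma> v"
  unfolding mon_def truncate_exps_def by (rule prod.cong) auto

lemma mon_nonzero: "mult_independent r \<gamma> \<Longrightarrow> mon r \<gamma> v \<noteq> 0"
  unfolding mon_def mult_independent_def by (simp add: power_int_not_zero)

lemma mult_independent_inj_on_mon_power:
  assumes indep: "mult_independent r \<gamma>" and "l > 0"
  shows "inj_on (\<lambda>w. mon r \<gamma> w ^ l) (range (truncate_exps r))"
proof (rule inj_onI)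
  fix w w' assume "w \<in> range (truncate_exps r)" "w' \<in> range (truncate_exps r)"
    and eq: "mon r \<gamma> w ^ l = mon r \<gamma> w' ^ l"
  have \<gamma>0: "\<gamma> j \<noteq> 0" if "j < r" for j
    using indep that unfolding mult_independent_def by blast
  have "mon r \<gamma> (\<lambda>j. (w j - w' j) * int l) = mon r \<gamma> w ^ l / mon r \<gamma> w' ^ l"
    unfolding mon_def prod_power_distrib prod_dividef[symmetric]
    by (rule prod.cong) (simp_all add: \<gamma>0 power_int_diff power_int_power' algebra_simps)
  also have "\<dots> = 1"
    using eq mon_nonzero[OF indep] by simp
  finally have "\<forall>j<r. w j = w' j"
    using indep \<open>l > 0\<close> unfolding mult_independent_def mon_def by fastforce
  with \<open>w \<in> _\<close> \<open>w' \<in> _\<close> show "w = w'"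
    by (auto simp: truncate_exps_def)
qed

lemma U_coeff_truncate_exps:
  "U_coeff m r g \<zeta> e0 e a (truncate_exps r v) = U_coeff m r g \<zeta> e0 e a v"
  unfolding U_coeff_def truncate_exps_def by (rule sum.cong) auto

lemma U_zero_iff:
  "U_zero m r g \<zeta> e0 e a \<longleftrightarrow> (\<forall>i<m. U_coeff m r g \<zeta> e0 e a (truncate_exps r (e i)) = 0)"
proof -
  have "U_coeff m r g \<zeta> e0 e a v = 0"
    if "\<forall>i<m. U_coeff m r g \<zeta> e0 e a (truncate_exps r (e i)) = 0" for v
  proof (cases "\<exists>i<m. \<forall>j<r. e i j = v j")
    case True
    then obtain i where "i < m" "truncate_exps r (e i) = truncate_exps r v"
      by (auto simp: truncate_exps_def fun_eq_iff)
    with that show ?thesis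
      by (metis U_coeff_truncate_exps)
  next
    case False
    then have "{i. i < m \<and> (\<forall>j<r. e i j = v j)} = {}"
      by auto
    then show ?thesis
      unfolding U_coeff_def by (simp only: sum.empty)
  qed
  then show ?thesis
    unfolding U_zero_def by blast
qed

lemma mod_add_mult_dvd:
  fixes M l :: nat
  assumes "M dvd l"
  shows "(A + j * l) mod M = A mod M"
  using assms by (auto elim!: dvdE simp: mult.left_commute)

lemma power_int_mult_cong:
  fixes \<zeta> :: "'a::field"
  assumes "\<zeta> ^ M = 1" "M > 0" "n mod M = a mod M"
  shows "\<zeta> powi (x * int n) = \<zeta> powi (x * int a)"
proof -
  have "\<zeta> \<noteq> 0"
    using assms(1,2) by (auto simp: power_0_left)
  have "int n mod int M = int a mod int M"
    using assms(3) by (metis of_nat_mod)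
  then have "int M dvd int n - int a"
    by (simp add: mod_eq_dvd_iff)
  then obtain t where "int n - int a = int M * t"
    by (elim dvdE)
  then have "x * int n = x * int a + int M * (x * t)"
    by (simp add: algebra_simps)
  then have "\<zeta> powi (x * int n) = \<zeta> powi (x * int a) * (\<zeta> ^ M) powi (x * t)"
    using \<open>\<zeta> \<noteq> 0\<close> by (simp add: power_int_add power_int_mult)
  with assms(1) show ?thesis
    by simp
qed

lemma U_coeff_expansion:
  fixes u :: "nat \<Rightarrow> complex"
  assumes repr: "\<And>n. u n = (\<Sum>i<m. poly (g i) (of_nat n) * \<alpha> i ^ n)"
    and decomp: "\<And>i. i < m \<Longrightarrow> \<alpha> i = \<zeta> powi e0 i * mon r \<gamma> (e i)"
    and \<zeta>: "\<zeta> ^ M = 1" "M > 0" and n: "n mod M = a mod M"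
  shows "u n = (\<Sum>w\<in>(\<lambda>i. truncate_exps r (e i)) ` {..<m}.
      poly (U_coeff m r g \<zeta> e0 e a w) (of_nat n) * mon r \<gamma> w ^ n)"
proof -
  define T where "T i = truncate_exps r (e i)" for i
  define c where "c i = \<zeta> powi (e0 i * int a)" for i
  have "\<alpha> i ^ n = c i * mon r \<gamma> (T i) ^ n" if "i < m" for i
    using power_int_mult_cong[OF \<zeta> n, of "e0 i"]
    by (simp add: decomp[OF that] T_def c_def mon_truncate_exps power_mult_distrib
        power_int_power')
  then have "u n = (\<Sum>i<m. (c i * poly (g i) (of_nat n)) * mon r \<gamma> (T i) ^ n)"
    unfolding repr by (intro sum.cong) simp_all
  also have "\<dots> = (\<Sum>w\<in>T ` {..<m}.
      \<Sum>i\<in>{i\<in>{..<m}. T i = w}. (c i * poly (g i) (of_nat n)) * mon r \<gamma> w ^ n)"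
    by (subst sum.image_gen[of _ _ T]) auto
  also have "\<dots> = (\<Sum>w\<in>T ` {..<m}. poly (U_coeff m r g \<zeta> e0 e a w) (of_nat n) * mon r \<gamma> w ^ n)"
  proof (rule sum.cong[OF refl])
    fix w assume "w \<in> T ` {..<m}"
    then have "{i. i < m \<and> (\<forall>j<r. e i j = w j)} = {i\<in>{..<m}. T i = w}"
      by (auto simp: T_def truncate_exps_def fun_eq_iff)
    then show "(\<Sum>i\<in>{i\<in>{..<m}. T i = w}. (c i * poly (g i) (of_nat n)) * mon r \<gamma> w ^ n)
        = poly (U_coeff m r g \<zeta> e0 e a w) (of_nat n) * mon r \<gamma> w ^ n"
      by (simp add: U_coeff_def c_def poly_sum sum_distrib_right)
  qed
  finally show ?thesis
    unfolding T_def .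
qed

theorem corollary4:
  fixes u :: "nat \<Rightarrow> complex" and k m r M :: nat
    and \<alpha> :: "nat \<Rightarrow> complex" and g :: "nat \<Rightarrow> complex poly"
    and \<zeta> :: complex and \<gamma> :: "nat \<Rightarrow> complex"
    and e0 :: "nat \<Rightarrow> int" and e :: "nat \<Rightarrow> nat \<Rightarrow> int"
    and a A l :: nat
  assumes order: "lrs_order u k"
    and repr: "\<And>n. u n = (\<Sum>i<m. poly (g i) (of_nat n) * \<alpha> i ^ n)"
    and distinct: "\<And>i i'. i < m \<Longrightarrow> i' < m \<Longrightarrow> \<alpha> i = \<alpha> i' \<Longrightarrow> i = i'"
    and nonzero_roots: "\<And>i. i < m \<Longrightarrow> \<alpha> i \<noteq> 0"
    and nonzero_g: "\<And>i. i < m \<Longrightarrow> g i \<noteq> 0"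
    and period: "is_period m \<alpha> M"
    and zeta: "primitive_root_of_unity M \<zeta>"
    and gamma_alg: "\<And>j. j < r \<Longrightarrow> algebraic (\<gamma> j)"
    and gamma_indep: "mult_independent r \<gamma>"
    and alpha_decomp: "\<And>i. i < m \<Longrightarrow> \<alpha> i = \<zeta> powi e0 i * (\<Prod>j<r. \<gamma> j powi e i j)"
    and a_range: "1 \<le> a" "a \<le> M"
    and A_cong: "A mod M = a mod M"
    and l_pos: "l > 0" and l_dvd: "M dvd l"
    and zeros: "\<And>j. j < k \<Longrightarrow> u (A + j * l) = 0"
  shows "U_zero m r g \<zeta> e0 e a \<and> (\<forall>n. n mod M = a mod M \<longrightarrow> u n = 0)"
proof -
  have \<zeta>: "\<zeta> ^ M = 1" "M > 0"
    using zeta period by (auto simp: primitive_root_of_unity_def is_period_def)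
  define W where "W = (\<lambda>i. truncate_exps r (e i)) ` {..<m}"
  define U where "U = U_coeff m r g \<zeta> e0 e a"
  have expansion: "u n = (\<Sum>w\<in>W. poly (U w) (of_nat n) * mon r \<gamma> w ^ n)"
    if "n mod M = a mod M" for n
    unfolding W_def U_def
    by (rule U_coeff_expansion[OF repr _ \<zeta> that]) (simp add: alpha_decomp mon_def)
  have "satisfies_lr u k"
    using order by (simp add: lrs_order_def)
  then have "u (A + j * l) = 0" for j
    using zeros by (rule satisfies_lr_progression_zero)
  moreover have "(A + j * l) mod M = a mod M" for j
    using mod_add_mult_dvd[OF l_dvd] A_cong by simp
  moreover have "inj_on (\<lambda>w. mon r \<gamma> w ^ l) W"
    using mult_independent_inj_on_mon_power[OF gamma_indep l_pos]
    by (rule inj_on_subset) (auto simp: W_def)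
  ultimately have U_W: "U w = 0" if "w \<in> W" for w
    using that mon_nonzero[OF gamma_indep] l_pos expansion
    by (intro exp_poly_progression_eq_0_imp_coeffs_0[where \<beta> = "mon r \<gamma>" and A = A and l = l])
      (simp_all add: W_def)
  then have "U_zero m r g \<zeta> e0 e a"
    unfolding U_zero_iff by (simp add: U_def W_def)
  moreover have "u n = 0" if "n mod M = a mod M" for n
    using expansion[OF that] U_W by simp
  ultimately show ?thesis
    by blast
qed

end
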